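(* Let $E$ be the elliptic curve $Y^2+11Y=X^3+11X^2+33X$ over $\mathbb{Q}$, and let $j:E\to\mathbb{P}^1$ be the rational function $$j(X,Y)=\frac{h(X,Y)}{(XY-11)^{11}},$$ where $h(X,Y)=(X^2+11X+22)^3\big((11X^2+88X+121)Y+2X^4+55X^3+451X^2+1452X+1452\big)^3 g(X,Y)$ and $g(X,Y)=(6750X^8+337590X^7+5159935X^6+36807958X^5+145636931X^4+341425458X^3+474292533X^2+362189058X+117523307)Y+51975X^9+1746052X^8+24440064X^7+188870352X^6+892661770X^5+2692703508X^4+5217583888X^3+6299026712X^2+4320837279X+1288408000$. Then for every rational point $(x,y)\in E(\mathbb{Q})$ (affine), $j(x,y)\in\mathbb{Z}$ if and only if $\frac{x}{xy-11}\in\mathbb{Z}$.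
   Context: Under an isomorphism (Halberstadt's) between $E$ and the modular curve $X_{ns}(11)$ (normalizer of a non-split Cartan subgroup of level $11$) sending the cusps to the zeros of $Y-11/X$, the function $j$ above is the natural $j$-invariant map of degree $55$. The statement to prove concerns only the explicit rational function given. Here $j(x,y)\in\mathbb{Z}$ means the value is finite and integral; similarly for $x/(xy-11)$. *)

theory Defs
  imports Complex_Main
begin

definition on_E :: "rat \<Rightarrow> rat \<Rightarrow> bool" where
  "on_E x y \<longleftrightarrow> y^2 + 11*y = x^3 + 11*x^2 + 33*x"

definition g_poly :: "rat \<Rightarrow> rat \<Rightarrow> rat" where
  "g_poly X Y =
     (6750*X^8 + 337590*X^7 + 5159935*X^6 + 36807958*X^5 + 145636931*X^4
      + 341425458*X^3 + 474292533*X^2 + 362189058*X + 117523307) * Y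
     + 51975*X^9 + 1746052*X^8 + 24440064*X^7 + 188870352*X^6 + 892661770*X^5
     + 2692703508*X^4 + 5217583888*X^3 + 6299026712*X^2 + 4320837279*X + 1288408000"

definition h_poly :: "rat \<Rightarrow> rat \<Rightarrow> rat" where
  "h_poly X Y =
     (X^2 + 11*X + 22)^3
     * ((11*X^2 + 88*X + 121)*Y + 2*X^4 + 55*X^3 + 451*X^2 + 1452*X + 1452)^3
     * g_poly X Y"

text \<open>j(x,y) is finite and integral: the denominator (xy-11)^11 is nonzero
  (points with xy = 11 are the cusps, i.e. poles of j) and the quotient is an integer.\<close>
definition j_integral :: "rat \<Rightarrow> rat \<Rightarrow> bool" where
  "j_integral x y \<longleftrightarrow> x*y - 11 \<noteq> 0 \<and> h_poly x y / (x*y - 11)^11 \<in> \<int>"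

definition u_integral :: "rat \<Rightarrow> rat \<Rightarrow> bool" where
  "u_integral x y \<longleftrightarrow> x*y - 11 \<noteq> 0 \<and> x / (x*y - 11) \<in> \<int>"

end

theory Submission
  imports Defs "HOL-Computational_Algebra.Primes"
begin

text \<open>
  Every rational point of E is (x, y) = (a/d^2, b/d^3) with d > 0 and a, b
  coprime to d.  In these weighted coordinates x y - 11 = N / d^5 with N = a b - 11 d^5, so
  x/(x y - 11) = a d^3 / N and, since h is weighted homogeneous of degree 55 = 5 * 11,
  j(x, y) = H(a, b, d) / N^11 for the homogenization H of h.  We show that both
  divisibilities N | a d^3 and N^11 | H(a, b, d) are equivalent to N | 11:
  \<^item> N is coprime to d, so N | a d^3 forces N | a, hence N | 11 d^5 and N | 11;
  \<^item> if 11 | N then 11 divides a and b (from the curve equation), so 11^11 | H;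
  \<^item> a prime dividing N divides the homogenized cusp polynomial Q(a, d), and explicit
    resultant identities show that a common prime divisor of Q and a factor of H is 11;
    finally 11^2 never divides N.
\<close>

lemma coprime_add_multiple:
  fixes m c k :: int
  assumes "coprime m c"
  shows "coprime m (c + k * m)"
proof -
  have "gcd m (k * m + c) = gcd m c" by (rule gcd_add_mult)
  then have "gcd m (c + k * m) = 1" using assms by (simp add: add.commute)
  then show ?thesis by (rule gcd_eq_1_imp_coprime)
qed

lemma cube_eq_square:
  fixes s w :: int
  assumes "s > 0" "w > 0" "s^3 = w^2"
  obtains d where "d > 0" "s = d^2" "w = d^3"
proof -
  have "s^2 dvd w^2" using assms(3) by (metis dvd_triv_right power2_eq_square power3_eq_cube mult.assoc)
  then have "s dvd w" by simp
  then obtain d where wd: "w = s * d" by blast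
  have "s^2 * s = s^2 * d^2"
    using assms(3) unfolding wd by (simp add: power2_eq_square power3_eq_cube algebra_simps)
  then have sd: "s = d^2" using assms(1) by simp
  show ?thesis
  proof (rule that)
    show "d > 0" using wd assms(1,2) by (simp add: zero_less_mult_iff)
  qed (use sd wd in \<open>simp_all add: power2_eq_square power3_eq_cube\<close>)
qed

lemma dvd_prime_not_multiple_unit:
  fixes p N :: int
  assumes "prime p" "N dvd p" "\<not> p dvd N"
  shows "is_unit N"
  using irreducibleD'[OF prime_elem_imp_irreducible assms(2)] assms by auto

lemma prime_power_free_dvd:
  fixes p N :: int
  assumes "prime p" "N \<noteq> 0" "\<And>q. prime q \<Longrightarrow> q dvd N \<Longrightarrow> q = p" "\<not> p^2 dvd N"
  shows "N dvd p"
proof -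
  have unit: "is_unit M" if M0: "M \<noteq> 0" and nM: "\<not> p dvd M" and MN: "M dvd N" for M
  proof (rule ccontr)
    assume "\<not> is_unit M"
    then obtain q where q: "q dvd M" "prime q" using prime_divisor_exists[OF M0] by blast
    have "q dvd N" using q(1) MN by (rule dvd_trans)
    then have "q = p" using assms(3) q(2) by blast
    then show False using q(1) nM by simp
  qed
  show ?thesis
  proof (cases "p dvd N")
    case False
    then have "is_unit N" using unit[of N] assms(2) by simp
    then show ?thesis by (rule unit_imp_dvd)
  next
    case True
    then obtain M where M: "N = p * M" by blast
    have "\<not> p dvd M"
    proof
      assume "p dvd M"
      then have "p^2 dvd N" unfolding M power2_eq_square by (rule mult_dvd_mono[OF dvd_refl])
      then show False using assms(4) by contradiction
    qed
    moreover have "M \<noteq> 0" "M dvd N" using assms(2) M by simp_all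
    ultimately have "is_unit M" using unit by blast
    then show ?thesis unfolding M by (simp only: mult_unit_dvd_iff dvd_refl)
  qed
qed

lemma prime_dvd_prime_power_times_power:
  fixes p q d :: int
  assumes "prime p" "prime q" "p dvd q^k * d^m" "\<not> p dvd d"
  shows "p = q"
proof -
  have "\<not> p dvd d^m" using prime_dvd_power assms(1,4) by blast
  then have "p dvd q^k" using assms(1,3) prime_dvd_mult_iff by blast
  then have "p dvd q" using prime_dvd_power assms(1) by blast
  then show ?thesis using primes_dvd_imp_eq assms(1,2) by blast
qed

lemma prime_11: "prime (11::int)"
  by code_simp

subsection \<open>Weighted coordinates of rational points\<close>

lemma rational_point_weighted_coords:
  fixes x y :: rat and a3 a2 a4 a6 :: int
  assumes curve: "y^2 + of_int a3 * y = x^3 + of_int a2 * x^2 + of_int a4 * x + of_int a6"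
  obtains a b d :: int where "d > 0" "x = of_int a / of_int (d^2)" "y = of_int b / of_int (d^3)"
    "coprime a d" "coprime b d"
proof -
  obtain r s where x: "x = of_int r / of_int s" and s: "s > 0" and crs: "coprime r s"
    by (cases x) (simp add: Fract_of_int_quotient)
  obtain q w where y: "y = of_int q / of_int w" and w: "w > 0" and cqw: "coprime q w"
    by (cases y) (simp add: Fract_of_int_quotient)
  text \<open>Clearing denominators gives s^3 Y = w^2 X, where w is coprime to Y and s to X.\<close>
  define X where "X = r^3 + (a2 * r^2 + a4 * r * s + a6 * s^2) * s"
  define Y where "Y = q^2 + (a3 * q) * w"
  have "of_int (s^3 * Y) = (of_int (w^2 * X) :: rat)"
  proof -
    have "x * of_int s = of_int r" "y * of_int w = of_int q" using x y s w by simp_all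
    moreover have "(of_int s)^3 * ((y * of_int w)^2 + of_int a3 * (y * of_int w) * of_int w)
      = (of_int w)^2 * ((x * of_int s)^3 + (of_int a2 * (x * of_int s)^2
          + of_int a4 * (x * of_int s) * of_int s + of_int a6 * (of_int s)^2) * of_int s)"
      using curve by algebra
    ultimately show ?thesis unfolding X_def Y_def by simp
  qed
  then have cleared: "s^3 * Y = w^2 * X" by (simp only: of_int_eq_iff)
  have "coprime w Y" unfolding Y_def using cqw by (intro coprime_add_multiple) (simp add: ac_simps)
  then have w2_s3: "w^2 dvd s^3" using cleared
    by (metis coprime_commute coprime_dvd_mult_left_iff coprime_power_right_iff dvd_triv_left)
  have "coprime s X" unfolding X_def using crs by (intro coprime_add_multiple) (simp add: ac_simps)
  then have s3_w2: "s^3 dvd w^2" using cleared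
    by (metis coprime_commute coprime_dvd_mult_left_iff coprime_power_right_iff dvd_triv_left)
  have "s^3 = w^2" using w2_s3 s3_w2 s w by (intro zdvd_antisym_nonneg) simp_all
  then obtain d where "d > 0" "s = d^2" "w = d^3" using cube_eq_square s w by blast
  then show ?thesis using that x y crs cqw by simp
qed

subsection \<open>The homogenized polynomials\<close>

text \<open>With weights 2, 3, 1 for a, b, d, the factors of h homogenize to forms of degrees
  4, 8 and 19: F1_hom, F2_hom = F2_y b + F2_0 and G_hom = G_y b + d G_0.\<close>
definition F1_hom :: "'a::comm_ring_1 \<Rightarrow> 'a \<Rightarrow> 'a" where
  "F1_hom a d = a^2 + 11*a*d^2 + 22*d^4"

definition F2_y :: "'a::comm_ring_1 \<Rightarrow> 'a \<Rightarrow> 'a" where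
  "F2_y a d = 11*a^2*d + 88*a*d^3 + 121*d^5"

definition F2_0 :: "'a::comm_ring_1 \<Rightarrow> 'a \<Rightarrow> 'a" where
  "F2_0 a d = 2*a^4 + 55*a^3*d^2 + 451*a^2*d^4 + 1452*a*d^6 + 1452*d^8"

definition F2_hom :: "'a::comm_ring_1 \<Rightarrow> 'a \<Rightarrow> 'a \<Rightarrow> 'a" where
  "F2_hom a b d = F2_y a d * b + F2_0 a d"

definition G_y :: "'a::comm_ring_1 \<Rightarrow> 'a \<Rightarrow> 'a" where
  "G_y a d = 117523307*d^16 + 362189058*a*d^14 + 474292533*a^2*d^12 + 341425458*a^3*d^10
    + 145636931*a^4*d^8 + 36807958*a^5*d^6 + 5159935*a^6*d^4 + 337590*a^7*d^2 + 6750*a^8"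

definition G_0 :: "'a::comm_ring_1 \<Rightarrow> 'a \<Rightarrow> 'a" where
  "G_0 a d = 1288408000*d^18 + 4320837279*a*d^16 + 6299026712*a^2*d^14 + 5217583888*a^3*d^12
    + 2692703508*a^4*d^10 + 892661770*a^5*d^8 + 188870352*a^6*d^6 + 24440064*a^7*d^4
    + 1746052*a^8*d^2 + 51975*a^9"

definition G_hom :: "'a::comm_ring_1 \<Rightarrow> 'a \<Rightarrow> 'a \<Rightarrow> 'a" where
  "G_hom a b d = G_y a d * b + d * G_0 a d"

definition H_hom :: "'a::comm_ring_1 \<Rightarrow> 'a \<Rightarrow> 'a \<Rightarrow> 'a" where
  "H_hom a b d = F1_hom a d ^ 3 * F2_hom a b d ^ 3 * G_hom a b d"

definition on_E_weighted :: "int \<Rightarrow> int \<Rightarrow> int \<Rightarrow> bool" where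
  "on_E_weighted a b d \<longleftrightarrow> b^2 + 11*b*d^3 = a^3 + 11*a^2*d^2 + 33*a*d^4"

text \<open>Homogenized cusp polynomial: substituting y = 11/x in the equation of E gives
  x^5 + 11 x^4 + 33 x^3 - 121 x - 121 = 0, whose roots are the x-coordinates of the cusps.\<close>
definition cusp_poly :: "int \<Rightarrow> int \<Rightarrow> int" where
  "cusp_poly a d = a^5 + 11*a^4*d^2 + 33*a^3*d^4 - 121*a*d^8 - 121*d^10"

lemma on_E_weighted_coords:
  fixes a b d :: int and x y :: rat
  assumes "on_E x y" "d \<noteq> 0" "x = of_int a / of_int (d^2)" "y = of_int b / of_int (d^3)"
  shows "on_E_weighted a b d"
proof -
  have "x * (of_int d)^2 = of_int a" "y * (of_int d)^3 = of_int b"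
    using assms(2-4) by simp_all
  moreover have "(y * (of_int d)^3)^2 + 11 * (y * (of_int d)^3) * (of_int d)^3
      = (x * (of_int d)^2)^3 + 11 * (x * (of_int d)^2)^2 * (of_int d)^2
        + 33 * (x * (of_int d)^2) * (of_int d)^4"
    using assms(1) unfolding on_E_def by algebra
  ultimately have "(of_int (b^2 + 11*b*d^3) :: rat) = of_int (a^3 + 11*a^2*d^2 + 33*a*d^4)"
    by simp
  then show ?thesis unfolding on_E_weighted_def by (simp only: of_int_eq_iff)
qed

lemma h_poly_weighted: "h_poly x y * e^55 = H_hom (x*e^2) (y*e^3) (e::rat)"
proof -
  have "(x^2 + 11*x + 22) * e^4 = F1_hom (x*e^2) e" unfolding F1_hom_def by algebra
  moreover have "((11*x^2 + 88*x + 121)*y + 2*x^4 + 55*x^3 + 451*x^2 + 1452*x + 1452) * e^8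
      = F2_hom (x*e^2) (y*e^3) e"
    unfolding F2_hom_def F2_0_def F2_y_def by algebra
  moreover have "g_poly x y * e^19 = G_hom (x*e^2) (y*e^3) e"
    unfolding G_hom_def G_0_def G_y_def g_poly_def by algebra
  moreover have "h_poly x y * e^55 = ((x^2 + 11*x + 22) * e^4)^3
      * (((11*x^2 + 88*x + 121)*y + 2*x^4 + 55*x^3 + 451*x^2 + 1452*x + 1452) * e^8)^3
      * (g_poly x y * e^19)"
    unfolding h_poly_def by algebra
  ultimately show ?thesis unfolding H_hom_def by simp
qed

lemma of_int_H_hom:
  "(of_int (H_hom a b d) :: rat) = H_hom (of_int a) (of_int b) (of_int d)"
  unfolding H_hom_def F1_hom_def F2_hom_def F2_0_def F2_y_def G_hom_def G_0_def G_y_def by simp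

lemma quotients_in_weighted_coords:
  fixes a b d :: int and x y :: rat
  assumes "d \<noteq> 0" "x = of_int a / of_int (d^2)" "y = of_int b / of_int (d^3)"
  defines "N \<equiv> a*b - 11*d^5"
  shows "x*y - 11 = of_int N / of_int (d^5)"
    and "N \<noteq> 0 \<Longrightarrow> h_poly x y / (x*y - 11)^11 = of_int (H_hom a b d) / of_int (N^11)"
    and "N \<noteq> 0 \<Longrightarrow> x / (x*y - 11) = of_int (a*d^3) / of_int N"
proof -
  have e: "(of_int d :: rat) \<noteq> 0" using assms(1) by simp
  show t: "x*y - 11 = of_int N / of_int (d^5)"
    using e unfolding assms(2,3) N_def by (simp add: field_simps)
  have "x * (of_int d)^2 = of_int a" "y * (of_int d)^3 = of_int b"
    using e unfolding assms(2,3) by simp_all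
  then have "h_poly x y * (of_int d)^55 = of_int (H_hom a b d)"
    unfolding h_poly_weighted of_int_H_hom by simp
  then have h: "h_poly x y = of_int (H_hom a b d) / of_int (d^55)"
    using e by (simp add: field_simps)
  assume "N \<noteq> 0"
  then show "h_poly x y / (x*y - 11)^11 = of_int (H_hom a b d) / of_int (N^11)"
    and "x / (x*y - 11) = of_int (a*d^3) / of_int N"
    unfolding h t using e unfolding assms(2)
    by (simp_all add: field_simps power_mult_distrib flip: power_mult)
qed

subsection \<open>Common prime divisors of N and H\<close>

lemma coprime_N_d:
  fixes a b d :: int
  assumes "coprime a d" "coprime b d"
  shows "coprime (a*b - 11*d^5) d"
proof -
  have N: "a*b - 11*d^5 = a*b + (- 11*d^4) * d" by algebra
  have "coprime d (a*b + (- 11*d^4) * d)"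
    using assms by (intro coprime_add_multiple) (simp add: ac_simps)
  then show ?thesis unfolding N by (simp add: coprime_commute)
qed

lemma cusp_poly_on_curve:
  assumes "on_E_weighted a b d"
  shows "cusp_poly a d = (a*b - 11*d^5) * (a*b + 11*d^5 + 11*a*d^3)"
  using assms unfolding on_E_weighted_def cusp_poly_def by algebra

text \<open>The next three lemmas are resultant identities: a common divisor of the cusp
  polynomial and (modulo N) one of the factors of H divides 11^k d^m.\<close>
lemma common_divisor_cusp_F1:
  fixes a d c :: int
  assumes "c dvd cusp_poly a d" "c dvd F1_hom a d"
  shows "c dvd 11^2 * d^12"
proof -
  have "((-67)*d^2 + (-8)*a) * cusp_poly a d
      + ((-363)*d^8 + (-231)*a*d^6 + 88*a^2*d^4 + 67*a^3*d^2 + 8*a^4) * F1_hom a d = 11^2 * d^12"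
    unfolding cusp_poly_def F1_hom_def by algebra
  then show ?thesis using assms by (metis dvd_add dvd_mult)
qed

lemma common_divisor_cusp_F2:
  fixes a b d c :: int
  assumes "c dvd a*b - 11*d^5" "c dvd cusp_poly a d" "c dvd F2_hom a b d"
  shows "c dvd 11^3 * d^18"
proof -
  have "a * F2_hom a b d = F2_y a d * (a*b - 11*d^5) + (a * F2_0 a d + 11*d^5 * F2_y a d)"
    unfolding F2_hom_def by algebra
  then have "c dvd a * F2_0 a d + 11*d^5 * F2_y a d"
    using assms(1,3) by (metis dvd_add_right_iff dvd_mult dvd_mult2)
  moreover have "((-41877)*d^8 + (-56144)*a*d^6 + (-22748)*a^2*d^4 + (-3354)*a^3*d^2 + (-132)*a^4)
        * cusp_poly a d
      + ((-3806)*d^8 + (-1991)*a*d^6 + 946*a^2*d^4 + 588*a^3*d^2 + 66*a^4)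
        * (a * F2_0 a d + 11*d^5 * F2_y a d) = 11^3 * d^18"
    unfolding cusp_poly_def F2_0_def F2_y_def by algebra
  ultimately show ?thesis using assms(2) by (metis dvd_add dvd_mult)
qed

lemma common_divisor_cusp_G:
  fixes a b d c :: int
  assumes "c dvd a*b - 11*d^5" "c dvd cusp_poly a d" "c dvd G_hom a b d"
  shows "c dvd 11^5 * d^29"
proof -
  define B where "B = a * G_0 a d + 11*d^4 * G_y a d"
  have "a * G_hom a b d = G_y a d * (a*b - 11*d^5) + d * B"
    unfolding G_hom_def B_def by algebra
  then have "c dvd d * B" using assms(1,3) by (metis dvd_add_right_iff dvd_mult dvd_mult2)
  moreover have "(40111057247690*d^18 + 149668776051080*a*d^16 + 244080838286351*a^2*d^14
        + 227550244686479*a^3*d^12 + 133035637526572*a^4*d^10 + 50267175423113*a^5*d^8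
        + 12168634370123*a^6*d^6 + 1797564675357*a^7*d^4 + 144514082482*a^8*d^2 + 4717562850*a^9)
        * (d * cusp_poly a d)
      + (3754333*d^8 + 2451108*a*d^6 + (-842207)*a^2*d^4 + (-729680)*a^3*d^2 + (-90766)*a^4)
        * (d * B) = 11^5 * d^29"
    unfolding cusp_poly_def B_def G_0_def G_y_def by algebra
  ultimately show ?thesis using assms(2) by (metis dvd_add dvd_mult dvd_mult2)
qed

lemma prime_common_divisor_N_H:
  fixes a b d p :: int
  assumes p: "prime p" and pN: "p dvd a*b - 11*d^5" and pH: "p dvd H_hom a b d"
    and cop: "coprime a d" "coprime b d" and curve: "on_E_weighted a b d"
  shows "p = 11"
proof -
  have nd: "\<not> p dvd d"
    using coprime_common_divisor[OF coprime_N_d[OF cop]] pN p not_prime_unit by blast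
  have pQ: "p dvd cusp_poly a d" unfolding cusp_poly_on_curve[OF curve] using pN by simp
  have "p dvd F1_hom a d \<or> p dvd F2_hom a b d \<or> p dvd G_hom a b d"
    using pH p unfolding H_hom_def by (simp add: prime_dvd_mult_iff prime_dvd_power_iff)
  then have "p dvd 11^2 * d^12 \<or> p dvd 11^3 * d^18 \<or> p dvd 11^5 * d^29"
    using common_divisor_cusp_F1 common_divisor_cusp_F2 common_divisor_cusp_G pN pQ by blast
  then show ?thesis using prime_dvd_prime_power_times_power[OF p prime_11 _ nd] by blast
qed

subsection \<open>The prime 11\<close>

lemma eleven_dvd_coords:
  fixes a b d :: int
  assumes curve: "on_E_weighted a b d" and N: "11 dvd a*b - 11*d^5"
  shows "11 dvd a" "11 dvd b"
proof -
  have "11 dvd a*b" using dvd_add[OF N, of "11*d^5"] by simp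
  then have ab: "11 dvd a \<or> 11 dvd b" using prime_dvd_mult_iff[OF prime_11] by simp
  show a: "11 dvd a"
  proof (rule ccontr)
    assume "\<not> 11 dvd a"
    then obtain b1 where b1: "b = 11*b1" using ab by blast
    have "a^3 = 11 * (11*b1^2 + 11*b1*d^3 - a^2*d^2 - 3*a*d^4)"
      using curve unfolding on_E_weighted_def b1 by algebra
    then show False using \<open>\<not> 11 dvd a\<close> prime_dvd_power[OF prime_11, of a 3] by simp
  qed
  then obtain a1 where a1: "a = 11*a1" by blast
  have "b^2 = 11 * (121*a1^3 + 121*a1^2*d^2 + 33*a1*d^4 - b*d^3)"
    using curve unfolding on_E_weighted_def a1 by algebra
  then show "11 dvd b" using prime_dvd_power[OF prime_11, of b 2] by simp
qed

text \<open>N is never divisible by 11^2, because 11^2 | a b while 11 does not divide d.\<close>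
lemma not_121_dvd_N:
  fixes a b d :: int
  assumes curve: "on_E_weighted a b d" and cad: "coprime a d"
  shows "\<not> 11^2 dvd a*b - 11*d^5"
proof
  assume "11^2 dvd a*b - 11*d^5"
  then obtain k where k: "a*b - 11*d^5 = 121*k" by auto
  then have "11 dvd a*b - 11*d^5" by simp
  then obtain a1 b1 where a1: "a = 11*a1" and b1: "b = 11*b1"
    using eleven_dvd_coords[OF curve] by blast
  have "d^5 = 11 * (a1*b1 - k)" using k unfolding a1 b1 by algebra
  then have "11 dvd d" using prime_dvd_power[OF prime_11, of d 5] by simp
  moreover have "11 dvd a" using a1 by simp
  ultimately show False using coprime_common_divisor[OF cad, of 11] by simp
qed

lemma H_hom_divisible_by_11_pow_11:
  fixes a b d :: int
  assumes "11 dvd a" "11 dvd b"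
  shows "11^11 dvd H_hom a b d"
proof -
  obtain a1 b1 where a1: "a = 11*a1" and b1: "b = 11*b1" using assms by blast
  have "11 dvd F1_hom a d"
  proof
    show "F1_hom a d = 11 * (11*a1^2 + 11*a1*d^2 + 2*d^4)" unfolding F1_hom_def a1 by algebra
  qed
  moreover have "11^2 dvd F2_hom a b d"
  proof
    show "F2_hom a b d = 11^2 * (121*a1^2*b1*d + 88*a1*b1*d^3 + 11*b1*d^5 + 242*a1^4
        + 605*a1^3*d^2 + 451*a1^2*d^4 + 132*a1*d^6 + 12*d^8)"
      unfolding F2_hom_def F2_0_def F2_y_def a1 b1 by algebra
  qed
  moreover have "11^2 dvd G_hom a b d"
  proof
    show "G_hom a b d = 11^2 * (10683937*b1*d^16 + 362189058*a1*b1*d^14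
        + 5217217863*a1^2*b1*d^12 + 41312480418*a1^3*b1*d^10 + 193842755161*a1^4*b1*d^8
        + 538905313078*a1^5*b1*d^6 + 831012691685*a1^6*b1*d^4 + 598061277990*a1^7*b1*d^2
        + 131538404250*a1^8*b1 + 10648000*d^19 + 392803389*a1*d^17 + 6299026712*a1^2*d^15
        + 57393422768*a1^3*d^13 + 325817124468*a1^4*d^11 + 1188132815870*a1^5*d^9
        + 2765250823632*a1^6*d^7 + 3936096747264*a1^7*d^5 + 3093237627172*a1^8*d^3
        + 1012845712725*a1^9*d)"
      unfolding G_hom_def G_0_def G_y_def a1 b1 by algebra
  qed
  ultimately have "11^3 * (11^2)^3 * 11^2 dvd H_hom a b d"
    unfolding H_hom_def by (intro mult_dvd_mono dvd_power_same)
  then show ?thesis by simp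
qed

lemma u_criterion:
  fixes a b d :: int
  assumes curve: "on_E_weighted a b d" and cop: "coprime a d" "coprime b d"
  shows "(a*b - 11*d^5) dvd a*d^3 \<longleftrightarrow> (a*b - 11*d^5) dvd 11"
proof -
  define N where "N = a*b - 11*d^5"
  have cN: "coprime N d" unfolding N_def using coprime_N_d[OF cop] .
  have "N dvd a*d^3 \<longleftrightarrow> N dvd a" using cN by (simp add: coprime_dvd_mult_left_iff)
  also have "\<dots> \<longleftrightarrow> N dvd 11"
  proof
    assume "N dvd a"
    then have "N dvd 11*d^5" using dvd_diff[of N "a*b" N] unfolding N_def by simp
    then show "N dvd 11" using cN by (simp add: coprime_dvd_mult_left_iff)
  next
    assume N11: "N dvd 11"
    show "N dvd a"
    proof (cases "11 dvd N")
      case True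
      then have "11 dvd a" using eleven_dvd_coords(1)[OF curve] unfolding N_def by blast
      with N11 show ?thesis by (rule dvd_trans)
    next
      case False
      then show ?thesis using dvd_prime_not_multiple_unit[OF prime_11 N11] unit_imp_dvd by blast
    qed
  qed
  finally show ?thesis unfolding N_def .
qed

lemma j_criterion:
  fixes a b d :: int
  assumes curve: "on_E_weighted a b d" and cop: "coprime a d" "coprime b d"
    and N0: "a*b - 11*d^5 \<noteq> 0"
  shows "(a*b - 11*d^5)^11 dvd H_hom a b d \<longleftrightarrow> (a*b - 11*d^5) dvd 11"
proof
  assume N11: "(a*b - 11*d^5) dvd 11"
  show "(a*b - 11*d^5)^11 dvd H_hom a b d"
  proof (cases "11 dvd a*b - 11*d^5")
    case True
    then have "11^11 dvd H_hom a b d"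
      using H_hom_divisible_by_11_pow_11 eleven_dvd_coords[OF curve] by blast
    with dvd_power_same[OF N11] show ?thesis by (rule dvd_trans)
  next
    case False
    then have "is_unit ((a*b - 11*d^5)^11)"
      using dvd_prime_not_multiple_unit[OF prime_11 N11] is_unit_power_iff by blast
    then show ?thesis by (rule unit_imp_dvd)
  qed
next
  assume NH: "(a*b - 11*d^5)^11 dvd H_hom a b d"
  have "q = 11" if q: "prime q" "q dvd a*b - 11*d^5" for q
  proof -
    have "q dvd (a*b - 11*d^5)^11" using q(2) by (rule dvd_trans) simp
    then have "q dvd H_hom a b d" using NH by (rule dvd_trans)
    then show ?thesis using prime_common_divisor_N_H[OF q _ cop curve] by blast
  qed
  then show "(a*b - 11*d^5) dvd 11"
    using prime_power_free_dvd[OF prime_11 N0] not_121_dvd_N[OF curve cop(1)] by blast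
qed

theorem theorem4p1:
  fixes x y :: rat
  assumes "on_E x y"
  shows "j_integral x y \<longleftrightarrow> u_integral x y"
proof -
  have "y^2 + of_int 11 * y = x^3 + of_int 11 * x^2 + of_int 33 * x + of_int 0"
    using assms unfolding on_E_def by simp
  then obtain a b d :: int where d: "d > 0" and x: "x = of_int a / of_int (d^2)"
    and y: "y = of_int b / of_int (d^3)" and cop: "coprime a d" "coprime b d"
    by (rule rational_point_weighted_coords)
  have d0: "d \<noteq> 0" using d by simp
  have curve: "on_E_weighted a b d" using on_E_weighted_coords assms d0 x y by simp
  note quotients = quotients_in_weighted_coords[OF d0 x y]
  show ?thesis
  proof (cases "a*b - 11*d^5 = 0")
    case True
    then show ?thesis unfolding j_integral_def u_integral_def quotients(1) by simp
  next
    case False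
    then have "x*y - 11 \<noteq> 0"
      unfolding quotients(1) by (simp only: divide_eq_0_iff of_int_eq_0_iff) (use d0 in simp)
    then show ?thesis unfolding j_integral_def u_integral_def quotients(2,3)[OF False]
      by (simp only: of_int_div_of_int_in_Ints_iff)
        (simp add: False u_criterion[OF curve cop] j_criterion[OF curve cop False])
  qed
qed

end
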